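(* For any simple undirected graph $G$ with $n$ vertices and $m$ edges, $$n_G(\mathcal{L}_4)=m-n\langle k^2\rangle+\mu_1-\mu_2,\qquad \mu_1=\frac12\sum_{st\in E}(\xi(s)+\xi(t)),\quad \mu_2=\sum_{st\in E}|c(s,t)|.$$
   Context: $k_x$ degree of $x$, $\langle k^2\rangle=\frac1n\sum_xk_x^2$, $\Gamma(x)$ neighbourhood, $\xi(s)=\sum_{t\in\Gamma(s)}k_t$, $c(s,t)=\Gamma(s)\cap\Gamma(t)$. $\mathcal{L}_4$ is the path on 4 vertices; $n_G(F)$ counts (not necessarily induced) subgraphs isomorphic to $F$. *)

theory Defs
  imports Complex_Main
begin

definition simple_graph :: "'a set \<Rightarrow> 'a set set \<Rightarrow> bool" where
  "simple_graph V E \<longleftrightarrow> finite V \<and> (\<forall>e\<in>E. e \<subseteq> V \<and> card e = 2)"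

definition degree :: "'a set set \<Rightarrow> 'a \<Rightarrow> nat" where
  "degree E x = card {e\<in>E. x \<in> e}"

definition nbhd :: "'a set set \<Rightarrow> 'a \<Rightarrow> 'a set" where
  "nbhd E x = {y. {x, y} \<in> E}"

definition xi :: "'a set set \<Rightarrow> 'a \<Rightarrow> nat" where
  "xi E s = (\<Sum>t\<in>nbhd E s. degree E t)"

definition mean_sq_degree :: "'a set \<Rightarrow> 'a set set \<Rightarrow> real" where
  "mean_sq_degree V E = (1 / real (card V)) * (\<Sum>x\<in>V. real (degree E x) ^ 2)"

text \<open>Number of (not necessarily induced) subgraphs (V',E') of G isomorphic to the path
  on 4 vertices 0-1-2-3.\<close>
definition count_P4 :: "'a set \<Rightarrow> 'a set set \<Rightarrow> nat" where
  "count_P4 V E = card {(V', E'). V' \<subseteq> V \<and> E' \<subseteq> E \<and>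
     (\<exists>f. bij_betw f {0..<4::nat} V' \<and> E' = {{f i, f (Suc i)} | i. i < 3})}"

end

theory Submission
  imports Defs
begin

text \<open>
  Count the walks \<open>a - b - c - d\<close> that never step straight back (\<open>a \<noteq> c\<close>, \<open>b \<noteq> d\<close>).
  Choosing the middle arc \<open>(b, c)\<close> first, there are \<open>(k b - 1) (k c - 1)\<close> of them for
  each arc. Those with \<open>a = d\<close> close a triangle on the edge \<open>bc\<close>, which gives
  \<open>|\<Gamma>(b) \<inter> \<Gamma>(c)|\<close> of them per arc; all others are copies of the path on four vertices,
  each traversed in both directions. Expanding the product and turning sums over arcs into
  sums over vertices and edges (\<open>\<Sum>\<^sub>b\<^sub>c k c = \<Sum>\<^sub>v k v\<^sup>2\<close> by symmetry,
  \<open>\<Sum>\<^sub>b\<^sub>c 1 = 2 m\<close>) gives the formula.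
\<close>

lemma card_eq_mult_card_image:
  assumes "finite A" and "\<And>x. x \<in> A \<Longrightarrow> card {y \<in> A. f y = f x} = k"
  shows "card A = k * card (f ` A)"
proof -
  have "card A = (\<Sum>z\<in>f ` A. card {y \<in> A. f y = z})"
    using sum.image_gen[OF assms(1), of "\<lambda>_. 1" f] by (simp only: card_eq_sum)
  also have "\<dots> = (\<Sum>z\<in>f ` A. k)"
    using assms(2) by (intro sum.cong) auto
  finally show ?thesis by simp
qed

lemma mem_path_edges_cases:
  assumes "{x, y} \<in> {{a, b}, {b, c}, {c, d}}"
  shows "(x, y) \<in> {(a, b), (b, a), (b, c), (c, b), (c, d), (d, c)}"
  using assms unfolding insert_iff empty_iff doubleton_eq_iff by auto

lemma path_edges_eq_cases:
  assumes "distinct [a, b, c, d]" and "distinct [a', b', c', d']"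
    and "{{a', b'}, {b', c'}, {c', d'}} = {{a, b}, {b, c}, {c, d}}"
  shows "(a', b', c', d') = (a, b, c, d) \<or> (a', b', c', d') = (d, c, b, a)"
proof -
  have "e \<in> {{a, b}, {b, c}, {c, d}}" if "e \<in> {{a', b'}, {b', c'}, {c', d'}}" for e
    using that by (simp only: assms(3))
  then have "(a', b') \<in> {(a, b), (b, a), (b, c), (c, b), (c, d), (d, c)}"
    "(b', c') \<in> {(a, b), (b, a), (b, c), (c, b), (c, d), (d, c)}"
    "(c', d') \<in> {(a, b), (b, a), (b, c), (c, b), (c, d), (d, c)}"
    by (intro mem_path_edges_cases; simp)+
  with assms(1,2) show ?thesis
    unfolding insert_iff empty_iff prod.inject by (elim disjE conjE) simp_all
qed

lemma path_edges_enum: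
  "{{f i, f (Suc i)} | i. i < (3::nat)} = {{f 0, f 1}, {f 1, f 2}, {f 2, f 3}}"
proof -
  have "i < 3 \<longleftrightarrow> i = 0 \<or> i = 1 \<or> i = 2" for i :: nat by auto
  then show ?thesis by (auto simp: numeral_eq_Suc)
qed

lemma bij_betw_four_iff:
  "bij_betw f {0..<4::nat} A \<longleftrightarrow> distinct [f 0, f 1, f 2, f 3] \<and> A = {f 0, f 1, f 2, f 3}"
proof -
  have "{0..<4::nat} = set [0, 1, 2, 3]" by auto
  moreover have "inj_on f (set [0, 1, 2, 3::nat]) \<longleftrightarrow> distinct [f 0, f 1, f 2, f 3]"
    using distinct_map[of f "[0, 1, 2, 3::nat]"] by simp
  ultimately show ?thesis
    unfolding bij_betw_def by (simp add: eq_commute)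
qed

lemma inj_on_doubleton_left: "inj_on (\<lambda>t. {s, t}) A"
  unfolding inj_on_def by (auto simp: doubleton_eq_iff)

lemma mem_nbhd_commute: "t \<in> nbhd E s \<longleftrightarrow> s \<in> nbhd E t"
  unfolding nbhd_def by (simp add: insert_commute)

definition nonbacktracking_walks3 :: "'a set set \<Rightarrow> ('a \<times> 'a \<times> 'a \<times> 'a) set" where
  "nonbacktracking_walks3 E =
     {(a, b, c, d). {a, b} \<in> E \<and> {b, c} \<in> E \<and> {c, d} \<in> E \<and> a \<noteq> c \<and> b \<noteq> d}"

definition ordered_P4s :: "'a set set \<Rightarrow> ('a \<times> 'a \<times> 'a \<times> 'a) set" where
  "ordered_P4s E = {(a, b, c, d) \<in> nonbacktracking_walks3 E. a \<noteq> d}"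

definition triangle_walks :: "'a set set \<Rightarrow> ('a \<times> 'a \<times> 'a \<times> 'a) set" where
  "triangle_walks E = {(a, b, c, d) \<in> nonbacktracking_walks3 E. a = d}"

definition path_subgraph :: "'a \<times> 'a \<times> 'a \<times> 'a \<Rightarrow> 'a set \<times> 'a set set" where
  "path_subgraph = (\<lambda>(a, b, c, d). ({a, b, c, d}, {{a, b}, {b, c}, {c, d}}))"

locale finite_graph =
  fixes V :: "'a set" and E :: "'a set set"
  assumes simple: "simple_graph V E"
begin

lemma finite_vertices: "finite V"
  using simple unfolding simple_graph_def by simp

lemma card_edge: "e \<in> E \<Longrightarrow> card e = 2"
  using simple unfolding simple_graph_def by simp

lemma finite_edges: "finite E"
proof (rule finite_subset)
  show "E \<subseteq> Pow V" using simple unfolding simple_graph_def by auto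
qed (simp add: finite_vertices)

lemma edge_subset: "e \<in> E \<Longrightarrow> e \<subseteq> V"
  using simple unfolding simple_graph_def by simp

lemma edge_endpoints: "{x, y} \<in> E \<Longrightarrow> x \<noteq> y \<and> x \<in> V \<and> y \<in> V"
  using simple unfolding simple_graph_def by (cases "x = y") auto

lemma nbhd_eq: "nbhd E s = {t \<in> V. {s, t} \<in> E}"
  unfolding nbhd_def by (auto dest: edge_endpoints)

lemma finite_nbhd: "finite (nbhd E s)"
  unfolding nbhd_eq using finite_vertices by simp

lemma incident_edges_eq_image: "{e \<in> E. s \<in> e} = (\<lambda>t. {s, t}) ` nbhd E s"
proof (intro equalityI subsetI)
  fix e assume e: "e \<in> {e \<in> E. s \<in> e}"
  then obtain x y where "e = {x, y}" using card_edge[of e] by (auto simp: card_2_iff)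
  with e obtain t where "e = {s, t}" by auto
  with e show "e \<in> (\<lambda>t. {s, t}) ` nbhd E s" unfolding nbhd_def by auto
qed (auto simp: nbhd_def)

lemma degree_eq_card_nbhd: "degree E s = card (nbhd E s)"
  unfolding degree_def incident_edges_eq_image by (rule card_image[OF inj_on_doubleton_left])

lemma sum_edges_endpoints:
  "(\<Sum>e\<in>E. \<Sum>s\<in>e. F s e) = (\<Sum>s\<in>V. \<Sum>t\<in>nbhd E s. F s {s, t})"
proof -
  have "(\<Sum>e\<in>E. \<Sum>s\<in>e. F s e) = (\<Sum>e\<in>E. \<Sum>s\<in>{s \<in> V. s \<in> e}. F s e)"
    by (intro sum.cong refl) (auto dest: edge_subset)
  also have "\<dots> = (\<Sum>s\<in>V. \<Sum>e\<in>{e \<in> E. s \<in> e}. F s e)"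
    by (rule sum.swap_restrict[OF finite_edges finite_vertices])
  also have "\<dots> = (\<Sum>s\<in>V. \<Sum>t\<in>nbhd E s. F s {s, t})"
    unfolding incident_edges_eq_image by (simp add: sum.reindex inj_on_doubleton_left)
  finally show ?thesis .
qed

lemma sum_nbhd_commute:
  "(\<Sum>s\<in>V. \<Sum>t\<in>nbhd E s. g s t) = (\<Sum>s\<in>V. \<Sum>t\<in>nbhd E s. g t s)"
  unfolding nbhd_eq
  by (subst sum.swap_restrict[OF finite_vertices finite_vertices]) (simp add: insert_commute)

lemma card_Sigma_arcs:
  assumes "\<And>b c. finite (F b c)"
  shows "card (SIGMA b:V. SIGMA c:nbhd E b. F b c) = (\<Sum>b\<in>V. \<Sum>c\<in>nbhd E b. card (F b c))"
  using assms by (simp add: finite_vertices finite_nbhd)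

lemma nonbacktracking_walks3_eq_image:
  "nonbacktracking_walks3 E = (\<lambda>(b, c, a, d). (a, b, c, d)) `
     (SIGMA b:V. SIGMA c:nbhd E b. (nbhd E b - {c}) \<times> (nbhd E c - {b}))"
proof (intro equalityI subsetI)
  fix x assume "x \<in> nonbacktracking_walks3 E"
  then obtain a b c d where x: "x = (a, b, c, d)"
    and walk: "{a, b} \<in> E" "{b, c} \<in> E" "{c, d} \<in> E" "a \<noteq> c" "b \<noteq> d"
    unfolding nonbacktracking_walks3_def by auto
  then have "(b, c, a, d) \<in> (SIGMA b:V. SIGMA c:nbhd E b. (nbhd E b - {c}) \<times> (nbhd E c - {b}))"
    using edge_endpoints[OF walk(2)] by (auto simp: nbhd_def insert_commute)
  then show "x \<in> (\<lambda>(b, c, a, d). (a, b, c, d)) `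
      (SIGMA b:V. SIGMA c:nbhd E b. (nbhd E b - {c}) \<times> (nbhd E c - {b}))"
    unfolding x by (rule rev_image_eqI) simp
qed (auto simp: nonbacktracking_walks3_def nbhd_def insert_commute)

lemma finite_nonbacktracking_walks3: "finite (nonbacktracking_walks3 E)"
  unfolding nonbacktracking_walks3_eq_image by (simp add: finite_vertices finite_nbhd)

lemma card_nonbacktracking_walks3:
  "card (nonbacktracking_walks3 E) = (\<Sum>b\<in>V. \<Sum>c\<in>nbhd E b. (degree E b - 1) * (degree E c - 1))"
proof -
  have "card (nonbacktracking_walks3 E) =
      card (SIGMA b:V. SIGMA c:nbhd E b. (nbhd E b - {c}) \<times> (nbhd E c - {b}))"
    unfolding nonbacktracking_walks3_eq_image by (rule card_image) (auto simp: inj_on_def)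
  also have "\<dots> = (\<Sum>b\<in>V. \<Sum>c\<in>nbhd E b. card (nbhd E b - {c}) * card (nbhd E c - {b}))"
    by (simp add: card_Sigma_arcs finite_nbhd card_cartesian_product)
  also have "\<dots> = (\<Sum>b\<in>V. \<Sum>c\<in>nbhd E b. (degree E b - 1) * (degree E c - 1))"
    by (intro sum.cong refl) (simp add: degree_eq_card_nbhd mem_nbhd_commute)
  finally show ?thesis .
qed

lemma triangle_walks_eq_image:
  "triangle_walks E = (\<lambda>(b, c, a). (a, b, c, a)) ` (SIGMA b:V. SIGMA c:nbhd E b. nbhd E b \<inter> nbhd E c)"
proof (intro equalityI subsetI)
  fix x assume "x \<in> triangle_walks E"
  then obtain a b c where x: "x = (a, b, c, a)" and walk: "{a, b} \<in> E" "{b, c} \<in> E" "{c, a} \<in> E"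
    unfolding triangle_walks_def nonbacktracking_walks3_def by auto
  then have "(b, c, a) \<in> (SIGMA b:V. SIGMA c:nbhd E b. nbhd E b \<inter> nbhd E c)"
    using edge_endpoints[OF walk(2)] by (auto simp: nbhd_def insert_commute)
  then show "x \<in> (\<lambda>(b, c, a). (a, b, c, a)) ` (SIGMA b:V. SIGMA c:nbhd E b. nbhd E b \<inter> nbhd E c)"
    unfolding x by (rule rev_image_eqI) simp
next
  fix x assume "x \<in> (\<lambda>(b, c, a). (a, b, c, a)) ` (SIGMA b:V. SIGMA c:nbhd E b. nbhd E b \<inter> nbhd E c)"
  then obtain a b c where x: "x = (a, b, c, a)" and walk: "{b, a} \<in> E" "{b, c} \<in> E" "{c, a} \<in> E"
    unfolding nbhd_def by auto
  with edge_endpoints[OF walk(1)] edge_endpoints[OF walk(3)] show "x \<in> triangle_walks E"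
    unfolding triangle_walks_def nonbacktracking_walks3_def by (auto simp: insert_commute)
qed

lemma card_triangle_walks:
  "card (triangle_walks E) = (\<Sum>b\<in>V. \<Sum>c\<in>nbhd E b. card (nbhd E b \<inter> nbhd E c))"
proof -
  have "card (triangle_walks E) = card (SIGMA b:V. SIGMA c:nbhd E b. nbhd E b \<inter> nbhd E c)"
    unfolding triangle_walks_eq_image by (rule card_image) (auto simp: inj_on_def)
  then show ?thesis by (simp add: card_Sigma_arcs finite_nbhd)
qed

lemma card_nonbacktracking_walks3_split:
  "card (nonbacktracking_walks3 E) = card (ordered_P4s E) + card (triangle_walks E)"
proof -
  have "nonbacktracking_walks3 E = ordered_P4s E \<union> triangle_walks E"
    "ordered_P4s E \<inter> triangle_walks E = {}"
    unfolding ordered_P4s_def triangle_walks_def by auto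
  with finite_nonbacktracking_walks3 show ?thesis by (metis card_Un_disjoint finite_Un)
qed

lemma mem_ordered_P4s_iff:
  "(a, b, c, d) \<in> ordered_P4s E \<longleftrightarrow> distinct [a, b, c, d] \<and> {{a, b}, {b, c}, {c, d}} \<subseteq> E"
  unfolding ordered_P4s_def nonbacktracking_walks3_def by (auto dest: edge_endpoints)

lemma P4_subgraphs_eq_image:
  "{(V', E'). V' \<subseteq> V \<and> E' \<subseteq> E \<and>
     (\<exists>f. bij_betw f {0..<4::nat} V' \<and> E' = {{f i, f (Suc i)} | i. i < 3})}
   = path_subgraph ` ordered_P4s E"
proof (intro equalityI subsetI)
  fix y assume "y \<in> {(V', E'). V' \<subseteq> V \<and> E' \<subseteq> E \<and>
     (\<exists>f. bij_betw f {0..<4::nat} V' \<and> E' = {{f i, f (Suc i)} | i. i < 3})}"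
  then obtain V' E' f where "y = (V', E')" "E' \<subseteq> E" "bij_betw f {0..<4::nat} V'"
    "E' = {{f i, f (Suc i)} | i. i < 3}" by blast
  then have "(f 0, f 1, f 2, f 3) \<in> ordered_P4s E" "y = path_subgraph (f 0, f 1, f 2, f 3)"
    by (simp_all add: bij_betw_four_iff path_edges_enum mem_ordered_P4s_iff path_subgraph_def)
  then show "y \<in> path_subgraph ` ordered_P4s E" by blast
next
  fix y assume "y \<in> path_subgraph ` ordered_P4s E"
  then obtain a b c d where abcd: "(a, b, c, d) \<in> ordered_P4s E" "y = path_subgraph (a, b, c, d)"
    by auto
  obtain f :: "nat \<Rightarrow> 'a" where f: "f 0 = a" "f 1 = b" "f 2 = c" "f 3 = d"
    by (rule that[of "(!) [a, b, c, d]"]) simp_all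
  have "bij_betw f {0..<4} {a, b, c, d}"
    using abcd(1) f by (simp add: mem_ordered_P4s_iff bij_betw_four_iff)
  moreover have "{{a, b}, {b, c}, {c, d}} = {{f i, f (Suc i)} | i. i < 3}"
    using path_edges_enum[of f] f by simp
  moreover have "{a, b, c, d} \<subseteq> V" "{{a, b}, {b, c}, {c, d}} \<subseteq> E"
    using abcd(1) by (auto simp: mem_ordered_P4s_iff dest: edge_endpoints)
  ultimately show "y \<in> {(V', E'). V' \<subseteq> V \<and> E' \<subseteq> E \<and>
     (\<exists>f. bij_betw f {0..<4::nat} V' \<and> E' = {{f i, f (Suc i)} | i. i < 3})}"
    unfolding abcd(2) path_subgraph_def by auto
qed

lemma path_subgraph_fibre:
  assumes "(a, b, c, d) \<in> ordered_P4s E"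
  shows "{x \<in> ordered_P4s E. path_subgraph x = path_subgraph (a, b, c, d)} = {(a, b, c, d), (d, c, b, a)}"
proof (intro equalityI subsetI)
  fix x assume x: "x \<in> {x \<in> ordered_P4s E. path_subgraph x = path_subgraph (a, b, c, d)}"
  obtain a' b' c' d' where "x = (a', b', c', d')" by (cases x)
  with x assms path_edges_eq_cases[of a b c d a' b' c' d']
  show "x \<in> {(a, b, c, d), (d, c, b, a)}"
    by (auto simp: mem_ordered_P4s_iff path_subgraph_def)
qed (use assms in \<open>auto simp: mem_ordered_P4s_iff path_subgraph_def insert_commute\<close>)

lemma card_ordered_P4s: "card (ordered_P4s E) = 2 * count_P4 V E"
  unfolding count_P4_def P4_subgraphs_eq_image
proof (rule card_eq_mult_card_image)
  show "finite (ordered_P4s E)"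
    by (rule finite_subset[OF _ finite_nonbacktracking_walks3]) (auto simp: ordered_P4s_def)
  fix x assume "x \<in> ordered_P4s E"
  moreover obtain a b c d where "x = (a, b, c, d)" by (cases x)
  ultimately show "card {y \<in> ordered_P4s E. path_subgraph y = path_subgraph x} = 2"
    by (simp add: path_subgraph_fibre mem_ordered_P4s_iff)
qed

lemma degree_pos_if_mem_nbhd: "t \<in> nbhd E s \<Longrightarrow> 0 < degree E s"
  using finite_nbhd by (auto simp: degree_eq_card_nbhd card_gt_0_iff)

lemma sum_degree_eq_twice_card_edges: "(\<Sum>v\<in>V. degree E v) = 2 * card E"
proof -
  have "(\<Sum>v\<in>V. degree E v) = (\<Sum>e\<in>E. \<Sum>s\<in>e. 1)"
    using sum_edges_endpoints[of "\<lambda>_ _. 1::nat"] by (simp add: degree_eq_card_nbhd)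
  also have "\<dots> = (\<Sum>e\<in>E. 2)"
    by (simp add: card_edge)
  finally show ?thesis by simp
qed

lemma sum_arcs_degree_head:
  "(\<Sum>b\<in>V. \<Sum>c\<in>nbhd E b. real (degree E c)) = (\<Sum>v\<in>V. real (degree E v) ^ 2)"
  using sum_nbhd_commute[of "\<lambda>b c. real (degree E b)"]
  by (simp add: degree_eq_card_nbhd power2_eq_square)

lemma sum_edges_xi:
  "(\<Sum>e\<in>E. \<Sum>s\<in>e. real (xi E s)) = (\<Sum>v\<in>V. real (degree E v) * real (xi E v))"
  by (simp add: sum_edges_endpoints degree_eq_card_nbhd)

lemma real_card_nonbacktracking_walks3:
  "real (card (nonbacktracking_walks3 E)) =
     (\<Sum>v\<in>V. real (degree E v) * real (xi E v)) - 2 * (\<Sum>v\<in>V. real (degree E v) ^ 2)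
     + 2 * real (card E)"
proof -
  let ?k = "\<lambda>v. real (degree E v)"
  have "real (card (nonbacktracking_walks3 E)) =
      (\<Sum>b\<in>V. \<Sum>c\<in>nbhd E b. ?k b * ?k c - ?k b - ?k c + 1)"
    unfolding card_nonbacktracking_walks3 of_nat_sum
  proof (intro sum.cong refl)
    fix b c assume "c \<in> nbhd E b"
    then have "1 \<le> degree E b" "1 \<le> degree E c"
      using degree_pos_if_mem_nbhd mem_nbhd_commute by (metis Suc_leI One_nat_def)+
    then show "real ((degree E b - 1) * (degree E c - 1)) = ?k b * ?k c - ?k b - ?k c + 1"
      by (simp only: of_nat_mult of_nat_diff) (simp add: algebra_simps)
  qed
  also have "\<dots> = (\<Sum>v\<in>V. ?k v * real (xi E v)) - (\<Sum>v\<in>V. ?k v ^ 2)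
      - (\<Sum>b\<in>V. \<Sum>c\<in>nbhd E b. ?k c) + (\<Sum>v\<in>V. ?k v)"
    by (simp add: sum_subtractf sum.distrib xi_def sum_distrib_left degree_eq_card_nbhd
        power2_eq_square)
  also have "\<dots> = (\<Sum>v\<in>V. ?k v * real (xi E v)) - 2 * (\<Sum>v\<in>V. ?k v ^ 2) + 2 * real (card E)"
    unfolding sum_arcs_degree_head
    using arg_cong[OF sum_degree_eq_twice_card_edges, of real] by simp
  finally show ?thesis .
qed

lemma real_card_triangle_walks:
  "real (card (triangle_walks E)) = 2 * (\<Sum>e\<in>E. real (card (\<Inter>s\<in>e. nbhd E s)))"
proof -
  have "real (card (triangle_walks E)) =
      (\<Sum>b\<in>V. \<Sum>c\<in>nbhd E b. real (card (\<Inter>s\<in>{b, c}. nbhd E s)))"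
    by (simp add: card_triangle_walks)
  also have "\<dots> = (\<Sum>e\<in>E. \<Sum>s\<in>e. real (card (\<Inter>s\<in>e. nbhd E s)))"
    by (rule sum_edges_endpoints[symmetric])
  also have "\<dots> = (\<Sum>e\<in>E. 2 * real (card (\<Inter>s\<in>e. nbhd E s)))"
    by (simp add: card_edge)
  finally show ?thesis by (simp add: sum_distrib_left)
qed

end

theorem proposition12:
  fixes V :: "'a set" and E :: "'a set set"
  assumes "simple_graph V E"
  shows "real (count_P4 V E) =
           real (card E) - real (card V) * mean_sq_degree V E
           + (1/2) * (\<Sum>e\<in>E. \<Sum>s\<in>e. real (xi E s))
           - (\<Sum>e\<in>E. real (card (\<Inter>s\<in>e. nbhd E s)))"
proof -
  interpret finite_graph V E
    by (rule finite_graph.intro) (rule assms)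
  have "2 * real (count_P4 V E) =
      real (card (nonbacktracking_walks3 E)) - real (card (triangle_walks E))"
    using card_nonbacktracking_walks3_split card_ordered_P4s by simp
  moreover have "real (card V) * mean_sq_degree V E = (\<Sum>v\<in>V. real (degree E v) ^ 2)"
    unfolding mean_sq_degree_def using finite_vertices by (cases "V = {}") auto
  ultimately show ?thesis
    using real_card_nonbacktracking_walks3 real_card_triangle_walks sum_edges_xi by linarith
qed

end
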